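(* Let $1\le p<\infty$, $X=\ell_p(\mathbb Z_+)$, and let $\mathbf u=(u_n)_{n\ge1}$, $\mathbf v=(v_n)_{n\ge1}$ be bounded sequences of non-zero scalars. Assume that either $\liminf_{n\to\infty}\left|\frac{u_1\cdots u_n}{v_1\cdots v_n}\right|=0$ or $\limsup_{n\to\infty}\left|\frac{u_1\cdots u_n}{v_1\cdots v_n}\right|=\infty$. Then whenever $m_{\mathbf u}$ is a $B_{\mathbf u}$-invariant and $m_{\mathbf v}$ a $B_{\mathbf v}$-invariant Borel probability measure on $X$ with $m_{\mathbf u}(\ker e_0^* )=0=m_{\mathbf v}(\ker e_0^* )$, the measures $m_{\mathbf u}$ and $m_{\mathbf v}$ are mutually singular.
   Context: $(e_n)_{n\ge0}$ is the canonical basis of $\ell_p(\mathbb Z_+)$ (over $\mathbb R$ or $\mathbb C$) and $e_0^*$ is the first coordinate functional. For a bounded sequence $\mathbf w$ of non-zero scalars, $B_{\mathbf w}$ is the weighted backward shift $B_{\mathbf w}e_0=0$, $B_{\mathbf w}e_n=w_ne_{n-1}$ ($n\ge1$). Invariance of $m$ under $T$ means $m(T^{-1}(A))=m(A)$ for all Borel $A$. *)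

theory Defs
  imports "HOL-Probability.Probability"
begin

definition lp_space :: "real \<Rightarrow> (nat \<Rightarrow> 'a::real_normed_field) set" where
  "lp_space p = {x. summable (\<lambda>n. norm (x n) powr p)}"

definition lp_norm :: "real \<Rightarrow> (nat \<Rightarrow> 'a::real_normed_field) \<Rightarrow> real" where
  "lp_norm p x = (\<Sum>n. norm (x n) powr p) powr (1 / p)"

definition lp_open :: "real \<Rightarrow> (nat \<Rightarrow> 'a::real_normed_field) set \<Rightarrow> bool" where
  "lp_open p U \<longleftrightarrow> U \<subseteq> lp_space p \<and>
     (\<forall>x\<in>U. \<exists>e>0. \<forall>y\<in>lp_space p. lp_norm p (\<lambda>n. y n - x n) < e \<longrightarrow> y \<in> U)"

definition lp_borel :: "real \<Rightarrow> (nat \<Rightarrow> 'a::real_normed_field) measure" where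
  "lp_borel p = sigma (lp_space p) {U. lp_open p U}"

text \<open>Weighted backward shift: (B_w x)_n = w_(n+1) x_(n+1), i.e. B_w e_0 = 0, B_w e_n = w_n e_(n-1).\<close>
definition bw_shift :: "(nat \<Rightarrow> 'a::real_normed_field) \<Rightarrow> (nat \<Rightarrow> 'a) \<Rightarrow> (nat \<Rightarrow> 'a)" where
  "bw_shift w x = (\<lambda>n. w (Suc n) * x (Suc n))"

text \<open>Admissible weight sequence (w_n)_{n>=1}: bounded, non-zero (w 0 is irrelevant).\<close>
definition weight_seq :: "(nat \<Rightarrow> 'a::real_normed_field) \<Rightarrow> bool" where
  "weight_seq w \<longleftrightarrow> (\<exists>M. \<forall>n\<ge>1. norm (w n) \<le> M) \<and> (\<forall>n\<ge>1. w n \<noteq> 0)"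

definition lp_borel_prob :: "real \<Rightarrow> (nat \<Rightarrow> 'a::real_normed_field) measure \<Rightarrow> bool" where
  "lp_borel_prob p m \<longleftrightarrow> prob_space m \<and> space m = lp_space p \<and> sets m = sets (lp_borel p)"

definition invariant_under :: "('b \<Rightarrow> 'b) \<Rightarrow> 'b measure \<Rightarrow> bool" where
  "invariant_under T m \<longleftrightarrow>
     (\<forall>A\<in>sets m. T -` A \<inter> space m \<in> sets m \<and> emeasure m (T -` A \<inter> space m) = emeasure m A)"

definition mutually_singular :: "'b measure \<Rightarrow> 'b measure \<Rightarrow> bool" where
  "mutually_singular m1 m2 \<longleftrightarrow>
     (\<exists>A\<in>sets m1. A \<in> sets m2 \<and> emeasure m1 A = 0 \<and> emeasure m2 (space m2 - A) = 0)"

end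

theory Submission
  imports Defs
begin

text \<open>
  Since (B_w^n x)_0 = w_1 ... w_n x_n, invariance makes w_1 ... w_n x_n distributed like x_0.
  If |u_1 ... u_n / v_1 ... v_n| < d / t, the event |v_1 ... v_n x_n| <= t has m_v-probability
  m_v(|x_0| <= t), close to 1 for large t, while it forces |u_1 ... u_n x_n| <= d, an event of
  m_u-probability m_u(|x_0| <= d), small for small d because m_u(x_0 = 0) = 0.
  Events that are small for one measure and co-small for the other at every scale yield a
  separating set by Borel-Cantelli. The limsup alternative is the liminf one with u and v exchanged.
\<close>

lemma mutually_singularI:
  assumes "finite_measure M" "finite_measure N" and sets_eq: "sets M = sets N"
    and small: "\<And>e. e > 0 \<Longrightarrow> \<exists>E\<in>sets M. measure M E < e \<and> measure N (space N - E) < e"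
  shows "mutually_singular M N"
proof -
  interpret M: finite_measure M by fact
  interpret N: finite_measure N by fact
  obtain E where E: "\<And>k. E k \<in> sets M \<and> measure M (E k) < (1/2)^k
      \<and> measure N (space N - E k) < (1/2)^k"
    using small[of "(1/2)^_"] by (metis zero_less_divide_1_iff zero_less_numeral zero_less_power)
  have geometric: "summable f" if "\<And>k. 0 \<le> f k" "\<And>k. f k \<le> (1/2::real)^k" for f
    by (rule summable_comparison_test'[OF summable_geometric[of "1/2"]]) (use that in auto)
  have "limsup E \<in> null_sets M"
    using E by (intro borel_cantelli_limsup1 geometric)
      (auto intro: less_imp_le simp: M.emeasure_finite less_top[symmetric])
  moreover have "limsup (\<lambda>k. space N - E k) \<in> null_sets N"
    using E sets_eq by (intro borel_cantelli_limsup1 geometric)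
      (auto intro: less_imp_le simp: N.emeasure_finite less_top[symmetric])
  moreover have "space N - limsup E \<subseteq> limsup (\<lambda>k. space N - E k)"
    by (auto simp: limsup_INF_SUP) (meson atLeast_iff le_cases order.trans)
  ultimately show ?thesis
    unfolding mutually_singular_def using sets_eq
    by (intro bexI[of _ "limsup E"]) (auto intro: emeasure_eq_0)
qed

lemma mutually_singular_commute:
  assumes "sets M = sets N" "mutually_singular M N"
  shows "mutually_singular N M"
proof -
  obtain A where A: "A \<in> sets M" "A \<in> sets N" "emeasure M A = 0" "emeasure N (space N - A) = 0"
    using assms(2) unfolding mutually_singular_def by blast
  have "space M = space N" by (rule sets_eq_imp_space_eq[OF assms(1)])
  moreover have "space M - (space N - A) = A" using sets.sets_into_space[OF A(1)] calculation by auto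
  ultimately show ?thesis
    unfolding mutually_singular_def using A assms(1)
    by (intro bexI[of _ "space N - A"]) auto
qed

lemma invariant_under_funpow:
  assumes "invariant_under T m" "T \<in> space m \<rightarrow> space m"
  shows "invariant_under (T ^^ n) m"
proof (induction n)
  case 0
  then show ?case by (simp add: invariant_under_def Int_absorb1 sets.sets_into_space)
next
  case (Suc n)
  show ?case unfolding invariant_under_def
  proof
    fix A assume "A \<in> sets m"
    define B where "B = (T ^^ n) -` A \<inter> space m"
    have B: "B \<in> sets m" "emeasure m B = emeasure m A"
      using Suc \<open>A \<in> sets m\<close> unfolding invariant_under_def B_def by auto
    have "(T ^^ Suc n) -` A \<inter> space m = T -` B \<inter> space m"
      using assms(2) unfolding B_def by (auto simp: funpow_Suc_right simp del: funpow.simps)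
    with assms(1) B show "(T ^^ Suc n) -` A \<inter> space m \<in> sets m \<and>
        emeasure m ((T ^^ Suc n) -` A \<inter> space m) = emeasure m A"
      unfolding invariant_under_def by auto
  qed
qed

lemma (in prob_space) cdf_distr:
  fixes X :: "'a \<Rightarrow> real"
  assumes "X \<in> borel_measurable M"
  shows "cdf (distr M borel X) = (\<lambda>s. prob {x \<in> space M. X x \<le> s})"
  using assms by (auto simp: cdf_def measure_distr vimage_def Int_def conj_commute)

lemma (in prob_space) ex_gt_prob_le_less:
  fixes X :: "'a \<Rightarrow> real"
  assumes "X \<in> borel_measurable M" "prob {x \<in> space M. X x \<le> a} < e"
  shows "\<exists>d>a. prob {x \<in> space M. X x \<le> d} < e"
proof -
  interpret D: real_distribution "distr M borel X" using assms(1) by simp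
  have "\<forall>\<^sub>F d in at_right a. a < d \<and> prob {x \<in> space M. X x \<le> d} < e"
    using D.cdf_is_right_cont[of a] assms(2)
    by (intro eventually_conj eventually_at_right_less order_tendstoD(2))
      (auto simp: continuous_within cdf_distr[OF assms(1)])
  then show ?thesis using eventually_happens'[OF trivial_limit_at_right_real] by blast
qed

lemma (in prob_space) ex_gt_prob_le_greater:
  fixes X :: "'a \<Rightarrow> real"
  assumes "X \<in> borel_measurable M" "e < 1"
  shows "\<exists>t>a. e < prob {x \<in> space M. X x \<le> t}"
proof -
  interpret D: real_distribution "distr M borel X" using assms(1) by simp
  have "\<forall>\<^sub>F t in at_top. a < t \<and> e < prob {x \<in> space M. X x \<le> t}"
    using D.cdf_lim_at_top_prob assms(2)
    by (intro eventually_conj eventually_gt_at_top order_tendstoD(1)) (auto simp: cdf_distr[OF assms(1)])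
  then show ?thesis using eventually_happens'[OF trivial_limit_at_top_linorder] by blast
qed

lemma liminf_ereal_eq_0_imp_less:
  assumes "liminf (\<lambda>n. ereal (f n)) = 0" "e > 0"
  shows "\<exists>n. f n < e"
proof (rule ccontr)
  assume "\<not> ?thesis"
  then have "ereal e \<le> liminf (\<lambda>n. ereal (f n))"
    by (intro Liminf_bounded always_eventually) (auto simp: not_less)
  then show False using assms by simp
qed

lemma limsup_ereal_eq_infinity_imp_greater:
  assumes "limsup (\<lambda>n. ereal (f n)) = \<infinity>"
  shows "\<exists>n. f n > c"
proof (rule ccontr)
  assume "\<not> ?thesis"
  then have "limsup (\<lambda>n. ereal (f n)) \<le> ereal c"
    by (intro Limsup_bounded always_eventually) (auto simp: not_less)
  then show False using assms by simp
qed

lemma lp_space_diff: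
  assumes "p > 0" "x \<in> lp_space p" "y \<in> lp_space p"
  shows "(\<lambda>n. y n - x n) \<in> lp_space p"
proof -
  have bound: "norm (y n - x n) powr p \<le> 2 powr p * (norm (y n) powr p + norm (x n) powr p)" for n
  proof -
    have "norm (y n - x n) powr p \<le> (2 * max (norm (y n)) (norm (x n))) powr p"
      using assms(1) norm_triangle_ineq4[of "y n" "x n"] by (intro powr_mono2) auto
    also have "\<dots> = 2 powr p * max (norm (y n)) (norm (x n)) powr p"
      by (simp add: powr_mult)
    also have "\<dots> \<le> 2 powr p * (norm (y n) powr p + norm (x n) powr p)"
      by (intro mult_left_mono) (auto simp: max_def)
    finally show ?thesis .
  qed
  have "summable (\<lambda>n. 2 powr p * (norm (y n) powr p + norm (x n) powr p))"
    using assms(2,3) unfolding lp_space_def by (intro summable_mult summable_add) auto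
  then show ?thesis unfolding lp_space_def mem_Collect_eq
    by (rule summable_comparison_test') (use bound in auto)
qed

lemma norm_le_lp_norm:
  assumes "p > 0" "x \<in> lp_space p"
  shows "norm (x j) \<le> lp_norm p x"
proof -
  have "norm (x j) powr p \<le> (\<Sum>n. norm (x n) powr p)"
    using assms(2) sum_le_suminf[of "\<lambda>n. norm (x n) powr p" "{j}"] unfolding lp_space_def by auto
  then have "(norm (x j) powr p) powr (1/p) \<le> (\<Sum>n. norm (x n) powr p) powr (1/p)"
    using assms(1) by (intro powr_mono2) auto
  then show ?thesis using assms(1) unfolding lp_norm_def by (simp add: powr_powr)
qed

lemma lp_open_coordinate_vimage:
  assumes "p > 0" "open U"
  shows "lp_open p {x \<in> lp_space p. x j \<in> U}"
  unfolding lp_open_def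
proof safe
  fix x assume x: "x \<in> lp_space p" "x j \<in> U"
  then obtain e where e: "e > 0" "ball (x j) e \<subseteq> U"
    using assms(2) open_contains_ball by blast
  have "y j \<in> U" if "y \<in> lp_space p" "lp_norm p (\<lambda>n. y n - x n) < e" for y
  proof -
    have "norm (y j - x j) < e"
      using norm_le_lp_norm[OF assms(1) lp_space_diff[OF assms(1) x(1) that(1)], of j] that(2) by simp
    then show ?thesis using e(2) by (auto simp: dist_norm norm_minus_commute)
  qed
  with e(1) show "\<exists>e>0. \<forall>y\<in>lp_space p.
      lp_norm p (\<lambda>n. y n - x n) < e \<longrightarrow> y \<in> {x \<in> lp_space p. x j \<in> U}"
    by blast
qed

lemma space_lp_borel: "space (lp_borel p) = lp_space p"
  unfolding lp_borel_def by (rule space_measure_of) (auto simp: lp_open_def)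

lemma measurable_lp_coordinate:
  assumes "p > 0" "sets m = sets (lp_borel p)"
  shows "(\<lambda>x. x j) \<in> borel_measurable m"
  unfolding measurable_cong_sets[OF assms(2) refl]
proof (rule borel_measurableI)
  fix U :: "'a set" assume "open U"
  have "{x \<in> lp_space p. x j \<in> U} \<in> sets (lp_borel p)"
    unfolding lp_borel_def using lp_open_coordinate_vimage[OF assms(1) \<open>open U\<close>]
    by (subst sets_measure_of) (auto simp: lp_open_def)
  then show "(\<lambda>x. x j) -` U \<inter> space (lp_borel p) \<in> sets (lp_borel p)"
    by (simp add: space_lp_borel vimage_def Int_def conj_commute)
qed

lemma bw_shift_lp_space:
  assumes "p > 0" "weight_seq w" "x \<in> lp_space p"
  shows "bw_shift w x \<in> lp_space p"
proof -
  obtain M where M: "\<And>n. n \<ge> 1 \<Longrightarrow> norm (w n) \<le> M"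
    using assms(2) unfolding weight_seq_def by auto
  have summable: "summable (\<lambda>n. norm (x (Suc n)) powr p)"
    using assms(3) summable_Suc_iff[of "\<lambda>n. norm (x n) powr p"] unfolding lp_space_def by simp
  have bound: "norm (norm (w (Suc n) * x (Suc n)) powr p) \<le> M powr p * norm (x (Suc n)) powr p"
    for n
  proof -
    have "norm (w (Suc n)) powr p \<le> M powr p" using M[of "Suc n"] assms(1) by (intro powr_mono2) auto
    then show ?thesis by (simp add: norm_mult powr_mult mult_right_mono)
  qed
  show ?thesis unfolding lp_space_def bw_shift_def mem_Collect_eq
    by (rule summable_comparison_test'[OF summable_mult[OF summable]]) (use bound in auto)
qed

lemma bw_shift_funpow_0: "(bw_shift w ^^ n) x 0 = (\<Prod>k=1..n. w k) * x n"
proof (induction n arbitrary: x)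
  case (Suc n)
  then show ?case
    by (simp add: funpow_Suc_right bw_shift_def prod.nat_ivl_Suc' mult_ac del: funpow.simps)
qed simp

lemma measure_weighted_coordinate_eq:
  fixes w :: "nat \<Rightarrow> 'a::real_normed_field"
  assumes "p > 0" "weight_seq w" "lp_borel_prob p m" "invariant_under (bw_shift w) m"
    and "A \<in> sets borel"
  shows "measure m {x \<in> space m. (\<Prod>k=1..n. w k) * x n \<in> A}
       = measure m {x \<in> space m. x 0 \<in> A}"
proof -
  have space: "space m = lp_space p" and sets: "sets m = sets (lp_borel p)"
    using assms(3) unfolding lp_borel_prob_def by auto
  have shift_maps: "bw_shift w \<in> space m \<rightarrow> space m"
    using bw_shift_lp_space[OF assms(1,2)] by (auto simp: space)
  then have maps: "bw_shift w ^^ n \<in> space m \<rightarrow> space m"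
    by (induction n) (auto simp: Pi_iff)
  define B where "B = {x \<in> space m. x 0 \<in> A}"
  have "B \<in> sets m"
    unfolding B_def using measurable_lp_coordinate[OF assms(1) sets] assms(5) by measurable
  moreover have "invariant_under (bw_shift w ^^ n) m"
    using assms(4) shift_maps by (rule invariant_under_funpow)
  ultimately have "measure m ((bw_shift w ^^ n) -` B \<inter> space m) = measure m B"
    unfolding invariant_under_def measure_def by auto
  moreover have "{x \<in> space m. (\<Prod>k=1..n. w k) * x n \<in> A} = (bw_shift w ^^ n) -` B \<inter> space m"
    using maps unfolding B_def by (auto simp: bw_shift_funpow_0)
  ultimately show ?thesis unfolding B_def by simp
qed

lemma mutually_singular_bw_shift_invariant:
  fixes u v :: "nat \<Rightarrow> 'a::real_normed_field"
  assumes p: "p > 0" and u: "weight_seq u" and v: "weight_seq v"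
    and mu: "lp_borel_prob p mu" and mv: "lp_borel_prob p mv"
    and inv_u: "invariant_under (bw_shift u) mu" and inv_v: "invariant_under (bw_shift v) mv"
    and null: "emeasure mu {x \<in> lp_space p. x 0 = 0} = 0"
    and ratio_small: "\<And>e. e > 0 \<Longrightarrow> \<exists>n. norm ((\<Prod>k=1..n. u k) / (\<Prod>k=1..n. v k)) < e"
  shows "mutually_singular mu mv"
proof -
  interpret mu: prob_space mu using mu unfolding lp_borel_prob_def by simp
  interpret mv: prob_space mv using mv unfolding lp_borel_prob_def by simp
  have space: "space mu = lp_space p" "space mv = lp_space p"
    and sets: "sets mu = sets (lp_borel p)" "sets mv = sets (lp_borel p)"
    using mu mv unfolding lp_borel_prob_def by auto
  note [measurable] = measurable_lp_coordinate[OF p sets(1)] measurable_lp_coordinate[OF p sets(2)]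
  have norm_0: "(\<lambda>x. norm (x 0)) \<in> borel_measurable mu" "(\<lambda>x. norm (x 0)) \<in> borel_measurable mv"
    by measurable
  have law_u: "measure mu {x \<in> space mu. norm (\<Prod>k=1..n. u k) * norm (x n) \<le> r}
      = measure mu {x \<in> space mu. norm (x 0) \<le> r}" for n r
    using measure_weighted_coordinate_eq[OF p u mu inv_u, of "cball 0 r" n] by (simp add: norm_mult)
  have law_v: "measure mv {x \<in> space mv. norm (\<Prod>k=1..n. v k) * norm (x n) \<le> r}
      = measure mv {x \<in> space mv. norm (x 0) \<le> r}" for n r
    using measure_weighted_coordinate_eq[OF p v mv inv_v, of "cball 0 r" n] by (simp add: norm_mult)
  show ?thesis
  proof (rule mutually_singularI)
    show "finite_measure mu" "finite_measure mv" by unfold_locales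
    show "sets mu = sets mv" using sets by simp
  next
    fix e :: real assume "e > 0"
    have "{x \<in> space mu. norm (x 0) \<le> 0} = {x \<in> lp_space p. x 0 = 0}"
      using space by auto
    then have "mu.prob {x \<in> space mu. norm (x 0) \<le> 0} < e"
      using null \<open>e > 0\<close> by (simp add: measure_def)
    then obtain d where d: "d > 0" "mu.prob {x \<in> space mu. norm (x 0) \<le> d} < e"
      using mu.ex_gt_prob_le_less[OF norm_0(1)] by blast
    obtain t where t: "t > 0" "1 - e < mv.prob {x \<in> space mv. norm (x 0) \<le> t}"
      using mv.ex_gt_prob_le_greater[OF norm_0(2), of "1 - e" 0] \<open>e > 0\<close> by auto
    obtain n where n: "norm ((\<Prod>k=1..n. u k) / (\<Prod>k=1..n. v k)) < d / t"
      using ratio_small d t by (meson divide_pos_pos)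
    define E where "E = {x \<in> space mv. norm (\<Prod>k=1..n. v k) * norm (x n) \<le> t}"
    have "E \<in> sets mv" unfolding E_def by measurable
    show "\<exists>E\<in>sets mu. mu.prob E < e \<and> mv.prob (space mv - E) < e"
    proof (intro bexI conjI)
      show "E \<in> sets mu" using \<open>E \<in> sets mv\<close> sets by simp
      have "(\<Prod>k=1..n. v k) \<noteq> 0"
        using v unfolding weight_seq_def by (auto simp: prod_zero_iff)
      then have scale: "norm (\<Prod>k=1..n. u k) * r \<le> d"
        if "0 \<le> r" "norm (\<Prod>k=1..n. v k) * r \<le> t" for r
      proof -
        have "norm (\<Prod>k=1..n. u k) * r
            = norm ((\<Prod>k=1..n. u k) / (\<Prod>k=1..n. v k)) * (norm (\<Prod>k=1..n. v k) * r)"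
          using \<open>(\<Prod>k=1..n. v k) \<noteq> 0\<close> by (simp add: norm_divide)
        also have "\<dots> \<le> d / t * t"
          using n d(1) t(1) that by (intro mult_mono) auto
        finally show ?thesis using t(1) by simp
      qed
      then have "E \<subseteq> {x \<in> space mu. norm (\<Prod>k=1..n. u k) * norm (x n) \<le> d}"
        using space unfolding E_def by auto
      then have "mu.prob E \<le> mu.prob {x \<in> space mu. norm (\<Prod>k=1..n. u k) * norm (x n) \<le> d}"
        by (intro mu.finite_measure_mono) measurable
      then show "mu.prob E < e" using law_u d by simp
      have "mv.prob (space mv - E) = 1 - mv.prob E"
        using mv.prob_compl[OF \<open>E \<in> sets mv\<close>] .
      then show "mv.prob (space mv - E) < e" using law_v t unfolding E_def by simp
    qed
  qed
qed

theorem proposition3p8: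
  fixes p :: real
    and u v :: "nat \<Rightarrow> 'a::{real_normed_field, banach}"
    and mu mv :: "(nat \<Rightarrow> 'a) measure"
  assumes "1 \<le> p"
    and "weight_seq u" and "weight_seq v"
    and "liminf (\<lambda>n. ereal (norm ((\<Prod>k=1..n. u k) / (\<Prod>k=1..n. v k)))) = 0
         \<or> limsup (\<lambda>n. ereal (norm ((\<Prod>k=1..n. u k) / (\<Prod>k=1..n. v k)))) = \<infinity>"
    and "lp_borel_prob p mu" and "lp_borel_prob p mv"
    and "invariant_under (bw_shift u) mu" and "invariant_under (bw_shift v) mv"
    and "emeasure mu {x \<in> lp_space p. x 0 = 0} = 0"
    and "emeasure mv {x \<in> lp_space p. x 0 = 0} = 0"
  shows "mutually_singular mu mv"
proof -
  have "p > 0" using assms(1) by simp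
  from assms(4) show ?thesis
  proof
    assume "liminf (\<lambda>n. ereal (norm ((\<Prod>k=1..n. u k) / (\<Prod>k=1..n. v k)))) = 0"
    then show ?thesis
      by (intro mutually_singular_bw_shift_invariant[OF \<open>p > 0\<close> assms(2,3,5-9)]
          liminf_ereal_eq_0_imp_less)
  next
    assume limsup: "limsup (\<lambda>n. ereal (norm ((\<Prod>k=1..n. u k) / (\<Prod>k=1..n. v k)))) = \<infinity>"
    have "\<exists>n. norm ((\<Prod>k=1..n. v k) / (\<Prod>k=1..n. u k)) < e" if "e > 0" for e
    proof -
      obtain n where "1 / e < norm ((\<Prod>k=1..n. u k) / (\<Prod>k=1..n. v k))"
        using limsup_ereal_eq_infinity_imp_greater[OF limsup] by blast
      then have "inverse (norm ((\<Prod>k=1..n. u k) / (\<Prod>k=1..n. v k))) < e"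
        using \<open>e > 0\<close> less_imp_inverse_less[of "1 / e"] by fastforce
      then show ?thesis by (auto simp: norm_divide)
    qed
    then have "mutually_singular mv mu"
      by (rule mutually_singular_bw_shift_invariant[OF \<open>p > 0\<close> assms(3,2,6,5,8,7,10)])
    then show ?thesis
      using assms(5,6) mutually_singular_commute unfolding lp_borel_prob_def by metis
  qed
qed

end
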